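(* Let $f:X\to Y$ be a continuous map admitting a continuous section $s:Y\to X$ ($f\circ s=\mathrm{id}_Y$) such that for each $y\in Y$, $s(y)$ belongs to every open subset $U\subseteq X$ with $U\cap f^{-1}(y)\neq\emptyset$. Then $f\in\{M\}^{lr}$; equivalently, for every topological space $B$ and every closed subset $A\subseteq B$, the inclusion $A\hookrightarrow B$ has the left lifting property with respect to $f$. Here $M:D\to E$ is the map with $D=\{x,y,z,c\}$ having open sets $\emptyset,\{x,y,z\},D$, $E=\{u,v\}$ antidiscrete, $M(x)=M(y)=u$, $M(z)=M(c)=v$.
   Context: For continuous maps $f:A\to B$, $g:C\to D'$, $f\pitchfork g$ (left lifting property of $f$ with respect to $g$) means: for all continuous $t:A\to C$, $b:B\to D'$ with $g\circ t=b\circ f$ there is continuous $d:B\to C$ with $d\circ f=t$, $g\circ d=b$. For a class $P$, $P^l=\{f: f\pitchfork g\ \forall g\in P\}$, $P^r=\{g: f\pitchfork g\ \forall f\in P\}$, $P^{lr}=(P^l)^r$. *)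

theory Defs
  imports "HOL-Analysis.Analysis"
begin

text \<open>Maps are HOL functions; equalities of maps
  are required on the relevant topological spaces.\<close>
definition llp ::
  "'a topology \<Rightarrow> 'b topology \<Rightarrow> ('a \<Rightarrow> 'b) \<Rightarrow>
   'c topology \<Rightarrow> 'd topology \<Rightarrow> ('c \<Rightarrow> 'd) \<Rightarrow> bool" where
  "llp A B f C D g \<longleftrightarrow>
     (\<forall>t b. continuous_map A C t \<and> continuous_map B D b \<and>
            (\<forall>a\<in>topspace A. g (t a) = b (f a)) \<longrightarrow>
       (\<exists>d. continuous_map B C d \<and>
            (\<forall>a\<in>topspace A. d (f a) = t a) \<and>
            (\<forall>x\<in>topspace B. g (d x) = b x)))"

datatype Dpt = Dx | Dy | Dz | Dc

definition D_top :: "Dpt topology" where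
  "D_top = topology (\<lambda>U. U = {} \<or> U = {Dx, Dy, Dz} \<or> U = UNIV)"

datatype Ept = Eu | Ev

definition E_top :: "Ept topology" where
  "E_top = topology (\<lambda>U. U = {} \<or> U = UNIV)"

fun M_map :: "Dpt \<Rightarrow> Ept" where
  "M_map Dx = Eu" | "M_map Dy = Eu" | "M_map Dz = Ev" | "M_map Dc = Ev"

lemma istopology_D: "istopology (\<lambda>U. U = {} \<or> U = {Dx, Dy, Dz} \<or> U = (UNIV::Dpt set))"
proof -
  have un: "\<Union>K = {} \<or> \<Union>K = {Dx, Dy, Dz} \<or> \<Union>K = UNIV"
    if K: "\<forall>S\<in>K. S = {} \<or> S = {Dx, Dy, Dz} \<or> S = (UNIV::Dpt set)" for K
  proof (cases "UNIV \<in> K")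
    case True then show ?thesis by blast
  next
    case False
    show ?thesis
    proof (cases "{Dx, Dy, Dz} \<in> K")
      case True
      with False K have "\<Union>K = {Dx, Dy, Dz}" by blast
      then show ?thesis by blast
    next
      case False2: False
      with False K have "\<Union>K = {}" by blast
      then show ?thesis by blast
    qed
  qed
  show ?thesis unfolding istopology_def
    using un by (auto simp: Int_absorb2)
qed

lemma istopology_E: "istopology (\<lambda>U. U = {} \<or> U = (UNIV::Ept set))"
  unfolding istopology_def by auto

lemma continuous_M: "continuous_map D_top E_top M_map"
  unfolding continuous_map_def D_top_def E_top_def
  using istopology_D istopology_E
  by (auto simp: topspace_def)

end

theory Submission
  imports Defs
begin

(* Lifting a square (t, b) against f along an injective closed map g: put d = t o g^-1 on
   the image of g and d = s o b off it. For U open in X, the preimage of U under d is the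
   open set (s o b)^-1 U minus the closed set g (A - t^-1 U): on the image of g this uses
   that s (b (g a)) = s (f (t a)) lies in U whenever t a does, which is exactly the
   genericity of s. Conversely, lifting against M forces g to be injective and closed, and
   the inclusion of a closed subspace is both. *)

lemma openin_D_top: "openin D_top U \<longleftrightarrow> U = {} \<or> U = {Dx, Dy, Dz} \<or> U = UNIV"
  unfolding D_top_def using istopology_D by (simp add: topology_inverse')

lemma openin_E_top: "openin E_top U \<longleftrightarrow> U = {} \<or> U = UNIV"
  unfolding E_top_def using istopology_E by (simp add: topology_inverse')

lemma topspace_D_top [simp]: "topspace D_top = UNIV"
  unfolding topspace_def using openin_D_top by auto

lemma topspace_E_top [simp]: "topspace E_top = UNIV"
  unfolding topspace_def using openin_E_top by auto

lemma continuous_map_into_E_top: "continuous_map X E_top h"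
  unfolding continuous_map_def openin_E_top by auto

lemma continuous_map_into_D_top_iff:
  "continuous_map X D_top h \<longleftrightarrow> openin X {x \<in> topspace X. h x \<noteq> Dc}"
proof -
  have "{x \<in> topspace X. h x \<in> {Dx, Dy, Dz}} = {x \<in> topspace X. h x \<noteq> Dc}"
    by (metis Dpt.exhaust Dpt.distinct(5,9,11) insert_iff singletonD)
  then show ?thesis
    unfolding continuous_map_def openin_D_top by auto
qed

lemma llp_M_map_imp_inj_on:
  assumes "llp A B g D_top E_top M_map"
  shows "inj_on g (topspace A)"
proof (rule inj_onI)
  fix a1 a2
  assume a: "a1 \<in> topspace A" "a2 \<in> topspace A" "g a1 = g a2"
  define t where "t a = (if a = a1 then Dx else Dy)" for a
  have "{a \<in> topspace A. t a \<noteq> Dc} = topspace A"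
    by (auto simp: t_def)
  then have "continuous_map A D_top t"
    by (simp add: continuous_map_into_D_top_iff)
  moreover have "\<forall>a\<in>topspace A. M_map (t a) = Eu"
    by (simp add: t_def)
  ultimately obtain d where "\<forall>a\<in>topspace A. d (g a) = t a"
    using assms[unfolded llp_def, rule_format, of t "\<lambda>_. Eu"] continuous_map_into_E_top
    by auto
  with a have "t a2 = t a1" by metis
  then show "a1 = a2" by (metis Dpt.distinct(1) t_def)
qed

lemma llp_M_map_imp_closed_map:
  assumes g: "continuous_map A B g" and lifts: "llp A B g D_top E_top M_map"
  shows "closed_map A B g"
  unfolding closed_map_def
proof (intro allI impI)
  fix C
  assume C: "closedin A C"
  define t where "t a = (if a \<in> C then Dc else Dz)" for a
  define b where "b \<beta> = (if \<beta> \<in> g ` topspace A then Ev else Eu)" for \<beta>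
  have "{a \<in> topspace A. t a \<noteq> Dc} = topspace A - C"
    by (auto simp: t_def)
  then have "continuous_map A D_top t"
    using C by (simp add: continuous_map_into_D_top_iff openin_diff)
  moreover have "\<forall>a\<in>topspace A. M_map (t a) = b (g a)"
    by (simp add: t_def b_def)
  ultimately obtain d where d: "continuous_map B D_top d" "\<forall>a\<in>topspace A. d (g a) = t a"
    "\<forall>\<beta>\<in>topspace B. M_map (d \<beta>) = b \<beta>"
    using lifts continuous_map_into_E_top unfolding llp_def by blast
  (* Off the image of g the lift d lands in {Dx, Dy}, so d^-1 {Dc} is exactly g ` C. *)
  have "closedin B (topspace B - {\<beta> \<in> topspace B. d \<beta> \<noteq> Dc})"
    using d(1) by (simp add: continuous_map_into_D_top_iff closedin_diff)
  moreover have "g ` C = topspace B - {\<beta> \<in> topspace B. d \<beta> \<noteq> Dc}"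
  proof
    show "g ` C \<subseteq> topspace B - {\<beta> \<in> topspace B. d \<beta> \<noteq> Dc}"
      using closedin_subset[OF C] continuous_map_image_subset_topspace[OF g] d(2)
      by (auto simp: t_def)
  next
    show "topspace B - {\<beta> \<in> topspace B. d \<beta> \<noteq> Dc} \<subseteq> g ` C"
    proof
      fix \<beta>
      assume "\<beta> \<in> topspace B - {\<beta> \<in> topspace B. d \<beta> \<noteq> Dc}"
      then have "\<beta> \<in> topspace B" "d \<beta> = Dc" by auto
      then have "\<beta> \<in> g ` topspace A"
        using d(3) by (metis M_map.simps(4) Ept.distinct(1) b_def)
      then obtain a where "a \<in> topspace A" "\<beta> = g a" by blast
      with \<open>d \<beta> = Dc\<close> d(2) have "a \<in> C"
        by (metis Dpt.distinct(12) t_def)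
      with \<open>\<beta> = g a\<close> show "\<beta> \<in> g ` C" by blast
    qed
  qed
  ultimately show "closedin B (g ` C)" by simp
qed

lemma llp_closed_map_generic_section:
  assumes s: "continuous_map Y X s"
    and right_inverse: "\<forall>y\<in>topspace Y. f (s y) = y"
    and generic: "\<forall>y\<in>topspace Y. \<forall>U. openin X U \<and> (\<exists>x\<in>U. f x = y) \<longrightarrow> s y \<in> U"
    and inj: "inj_on g (topspace A)"
    and closed: "closed_map A B g"
  shows "llp A B g X Y f"
  unfolding llp_def
proof (intro allI impI)
  fix t b
  assume "continuous_map A X t \<and> continuous_map B Y b \<and> (\<forall>a\<in>topspace A. f (t a) = b (g a))"
  then have t: "continuous_map A X t" and b: "continuous_map B Y b"
    and commutes: "\<forall>a\<in>topspace A. f (t a) = b (g a)" by auto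
  have g_into: "g ` topspace A \<subseteq> topspace B"
    using closed_map_imp_subset_topspace[OF closed] by blast
  define d where
    "d \<beta> = (if \<beta> \<in> g ` topspace A then t (inv_into (topspace A) g \<beta>) else s (b \<beta>))" for \<beta>
  have d_g: "d (g a) = t a" if "a \<in> topspace A" for a
    using that inj by (simp add: d_def)
  have "continuous_map B X d"
    unfolding continuous_map_def
  proof (intro conjI allI impI)
    show "d \<in> topspace B \<rightarrow> topspace X"
      using t b s inj by (auto simp: d_def continuous_map_def Pi_iff)
  next
    fix U
    assume U: "openin X U"
    have s_b_g: "s (b (g a)) \<in> U" if "a \<in> topspace A" "t a \<in> U" for a
    proof -
      have "b (g a) \<in> topspace Y"
        using that g_into b by (auto simp: continuous_map_def)
      then show ?thesis
        using generic U that commutes by metis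
    qed
    have "d \<beta> \<in> U \<longleftrightarrow> s (b \<beta>) \<in> U \<and> \<beta> \<notin> g ` {a \<in> topspace A. t a \<in> topspace X - U}"
      for \<beta>
    proof (cases "\<beta> \<in> g ` topspace A")
      case True
      then obtain a where a: "a \<in> topspace A" "\<beta> = g a" by blast
      moreover have "t a \<in> topspace X"
        using t a(1) by (simp add: continuous_map_def Pi_iff)
      ultimately show ?thesis
        using s_b_g d_g by (auto simp: inj_on_image_mem_iff[OF inj])
    next
      case False
      then show ?thesis by (auto simp: d_def)
    qed
    then have "{\<beta> \<in> topspace B. d \<beta> \<in> U}
          = {\<beta> \<in> topspace B. s (b \<beta>) \<in> U} - g ` {a \<in> topspace A. t a \<in> topspace X - U}"
      by blast
    moreover have "openin B {\<beta> \<in> topspace B. s (b \<beta>) \<in> U}"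
      using openin_continuous_map_preimage[OF continuous_map_compose[OF b s] U] by simp
    moreover have "closedin B (g ` {a \<in> topspace A. t a \<in> topspace X - U})"
      by (intro closed[unfolded closed_map_def, rule_format] closedin_continuous_map_preimage[OF t]
          closedin_diff closedin_topspace U)
    ultimately show "openin B {\<beta> \<in> topspace B. d \<beta> \<in> U}"
      by (simp add: openin_diff)
  qed
  moreover have "\<forall>\<beta>\<in>topspace B. f (d \<beta>) = b \<beta>"
    using commutes right_inverse b d_g by (auto simp: d_def continuous_map_def Pi_iff)
  ultimately show "\<exists>d. continuous_map B X d \<and> (\<forall>a\<in>topspace A. d (g a) = t a)
                    \<and> (\<forall>\<beta>\<in>topspace B. f (d \<beta>) = b \<beta>)"
    using d_g by blast
qed

theorem mainTheorem7:
  fixes X :: "'a topology" and Y :: "'b topology"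
    and f :: "'a \<Rightarrow> 'b" and s :: "'b \<Rightarrow> 'a"
  assumes f_cont: "continuous_map X Y f"
    and s_cont: "continuous_map Y X s"
    and sec: "\<forall>y\<in>topspace Y. f (s y) = y"
    and generic: "\<forall>y\<in>topspace Y. \<forall>U. openin X U \<and> (\<exists>x\<in>U. f x = y) \<longrightarrow> s y \<in> U"
  shows "(\<forall>(A :: 'c topology) (B :: 'd topology) g.
            continuous_map A B g \<and> llp A B g D_top E_top M_map \<longrightarrow> llp A B g X Y f)
       \<and> (\<forall>(B :: 'e topology) S. closedin B S \<longrightarrow> llp (subtopology B S) B id X Y f)"
proof (intro conjI allI impI)
  fix A :: "'c topology" and B :: "'d topology" and g
  assume "continuous_map A B g \<and> llp A B g D_top E_top M_map"
  then show "llp A B g X Y f"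
    using llp_closed_map_generic_section[OF s_cont sec generic]
      llp_M_map_imp_inj_on llp_M_map_imp_closed_map by blast
next
  fix B :: "'e topology" and S
  assume "closedin B S"
  then show "llp (subtopology B S) B id X Y f"
    by (intro llp_closed_map_generic_section[OF s_cont sec generic] inj_on_id closed_map_inclusion)
qed

end
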